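(* If $X$ is a Hausdorff space with basepoint $e$, then the James reduced product $J(X)$, with the operation of word concatenation, is a pre-$\Delta$-monoid.
   Context: The James reduced product of a based space $(X,e)$ is $J(X)=\coprod_{n\in\mathbb{N}}X^n/\sim$ where $\sim$ is generated by $(x_1,\dots,x_{j-1},e,x_{j+1},\dots,x_n)\sim(x_1,\dots,x_{j-1},x_{j+1},\dots,x_n)$; elements are finite words in $X\setminus\{e\}$ (with $e$ the empty word), and word concatenation makes $J(X)$ the free monoid on $(X,e)$. Topology: $X^n$ has the product topology, $J_n(X)=q(X^n)$ (words of length $\leq n$) has the quotient topology from $q_n:X^n\to J_n(X)$, and $J(X)$ has the weak (inductive limit) topology with respect to $\{J_n(X)\}$: $C\subseteq J(X)$ is closed iff $C\cap J_n(X)$ is closed in $J_n(X)$ for all $n$. A pre-$\Delta$-monoid is a space $M$ with an associative operation $\ast$ with identity such that for any continuous paths $\alpha,\beta:[0,1]\to M$, the pointwise product $t\mapsto\alpha(t)\ast\beta(t)$ is continuous. *)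

theory Defs
  imports "HOL-Analysis.Analysis"
begin

definition quotient_topology :: "'a topology \<Rightarrow> ('a \<Rightarrow> 'b) \<Rightarrow> 'b topology" where
  "quotient_topology X f = topology (\<lambda>U. U \<subseteq> f ` topspace X \<and> openin X {x \<in> topspace X. f x \<in> U})"

definition james_power :: "'a topology \<Rightarrow> nat \<Rightarrow> (nat \<Rightarrow> 'a) topology" where
  "james_power X n = product_topology (\<lambda>_. X) {..<n}"

text \<open>The quotient map q_n : X^n \<rightarrow> J(X): delete all occurrences of the basepoint.
  Elements of J(X) are reduced words, i.e. lists over topspace X - {e}.\<close>
definition james_q :: "'a \<Rightarrow> nat \<Rightarrow> (nat \<Rightarrow> 'a) \<Rightarrow> 'a list" where
  "james_q e n x = filter (\<lambda>a. a \<noteq> e) (map x [0..<n])"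

definition james_filtration :: "'a topology \<Rightarrow> 'a \<Rightarrow> nat \<Rightarrow> 'a list topology" where
  "james_filtration X e n = quotient_topology (james_power X n) (james_q e n)"

definition james_carrier :: "'a topology \<Rightarrow> 'a \<Rightarrow> 'a list set" where
  "james_carrier X e = (\<Union>n. topspace (james_filtration X e n))"

definition james_reduced_product :: "'a topology \<Rightarrow> 'a \<Rightarrow> 'a list topology" where
  "james_reduced_product X e = topology (\<lambda>U. U \<subseteq> james_carrier X e \<and>
     (\<forall>n. closedin (james_filtration X e n)
            ((james_carrier X e - U) \<inter> topspace (james_filtration X e n))))"

definition pre_delta_monoid :: "'m topology \<Rightarrow> ('m \<Rightarrow> 'm \<Rightarrow> 'm) \<Rightarrow> 'm \<Rightarrow> bool" where
  "pre_delta_monoid M mul one \<longleftrightarrow>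
     one \<in> topspace M \<and>
     (\<forall>a\<in>topspace M. \<forall>b\<in>topspace M. mul a b \<in> topspace M) \<and>
     (\<forall>a\<in>topspace M. \<forall>b\<in>topspace M. \<forall>c\<in>topspace M. mul (mul a b) c = mul a (mul b c)) \<and>
     (\<forall>a\<in>topspace M. mul one a = a \<and> mul a one = a) \<and>
     (\<forall>\<alpha> \<beta>. pathin M \<alpha> \<and> pathin M \<beta> \<longrightarrow> pathin M (\<lambda>t. mul (\<alpha> t) (\<beta> t)))"

end

theory Submission
  imports Defs
begin

text \<open>The quotient map \<open>q\<^sub>n : X\<^sup>n \<rightarrow> J\<^sub>n(X)\<close> is closed with finite fibres when \<open>X\<close> is T1:
  the saturation of a closed set \<open>A\<close> is the finite union, over the order-preserving partial
  maps \<open>\<sigma>\<close> of \<open>{..<n}\<close>, of the preimages of \<open>A\<close> under the continuous reindexings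
  \<open>x \<mapsto> x \<circ> \<sigma>\<close> (padded with \<open>e\<close>). Hence \<open>J\<^sub>n(X)\<close> is T1, closed sets of \<open>J\<^sub>n(X)\<close> are closed
  in every \<open>J\<^sub>m(X)\<close> and in \<open>J(X)\<close>, and a compact subset of \<open>J(X)\<close> -- such as the image of a
  path -- lies in some \<open>J\<^sub>n(X)\<close>, because a sequence of words of unbounded length is closed
  and discrete. Finally \<open>q\<^sub>n \<times> q\<^sub>m\<close> is proper, hence a quotient map, and concatenation lifts
  along it to the continuous juxtaposition \<open>X\<^sup>n \<times> X\<^sup>m \<rightarrow> X\<^sup>n\<^sup>+\<^sup>m\<close>; so the pointwise concatenation
  of two paths is a path in some \<open>J\<^sub>n\<^sub>+\<^sub>m(X)\<close> and therefore in \<open>J(X)\<close>.\<close>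

lemma istopology_quotient_topology:
  "istopology (\<lambda>U. U \<subseteq> f ` topspace X \<and> openin X {x \<in> topspace X. f x \<in> U})"
  unfolding istopology_def
proof (rule conjI; intro allI impI)
  fix S T
  assume "S \<subseteq> f ` topspace X \<and> openin X {x \<in> topspace X. f x \<in> S}"
    and "T \<subseteq> f ` topspace X \<and> openin X {x \<in> topspace X. f x \<in> T}"
  moreover have "{x \<in> topspace X. f x \<in> S \<inter> T} = {x \<in> topspace X. f x \<in> S} \<inter> {x \<in> topspace X. f x \<in> T}"
    by auto
  ultimately show "S \<inter> T \<subseteq> f ` topspace X \<and> openin X {x \<in> topspace X. f x \<in> S \<inter> T}"
    by auto
next
  fix K
  assume "\<forall>S\<in>K. S \<subseteq> f ` topspace X \<and> openin X {x \<in> topspace X. f x \<in> S}"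
  moreover have "{x \<in> topspace X. f x \<in> \<Union>K} = (\<Union>S\<in>K. {x \<in> topspace X. f x \<in> S})"
    by auto
  ultimately show "\<Union>K \<subseteq> f ` topspace X \<and> openin X {x \<in> topspace X. f x \<in> \<Union>K}"
    by auto
qed

lemma openin_quotient_topology:
  "openin (quotient_topology X f) U \<longleftrightarrow> U \<subseteq> f ` topspace X \<and> openin X {x \<in> topspace X. f x \<in> U}"
  unfolding quotient_topology_def by (simp add: topology_inverse'[OF istopology_quotient_topology])

lemma topspace_quotient_topology: "topspace (quotient_topology X f) = f ` topspace X"
proof (rule antisym)
  show "topspace (quotient_topology X f) \<subseteq> f ` topspace X"
    using openin_topspace[of "quotient_topology X f"] unfolding openin_quotient_topology
    by (rule conjunct1)
  have "{x \<in> topspace X. f x \<in> f ` topspace X} = topspace X"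
    by auto
  then have "openin (quotient_topology X f) (f ` topspace X)"
    unfolding openin_quotient_topology by simp
  then show "f ` topspace X \<subseteq> topspace (quotient_topology X f)"
    by (rule openin_subset)
qed

lemma quotient_map_quotient_topology: "quotient_map X (quotient_topology X f) f"
  unfolding quotient_map_def topspace_quotient_topology openin_quotient_topology by auto

lemma topspace_james_power: "topspace (james_power X n) = {..<n} \<rightarrow>\<^sub>E topspace X"
  by (simp add: james_power_def)

lemma continuous_map_james_power_component:
  "i < n \<Longrightarrow> continuous_map (james_power X n) X (\<lambda>x. x i)"
  unfolding james_power_def using continuous_map_product_projection[of i "{..<n}" "\<lambda>_. X"] by simp

lemma continuous_map_into_james_power:
  assumes "\<And>k. k < n \<Longrightarrow> continuous_map Y X (\<lambda>y. g y k)"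
    and "\<And>y k. y \<in> topspace Y \<Longrightarrow> n \<le> k \<Longrightarrow> g y k = undefined"
  shows "continuous_map Y (james_power X n) g"
  unfolding james_power_def continuous_map_componentwise
proof (intro conjI ballI)
  show "g ` topspace Y \<subseteq> extensional {..<n}"
    using assms(2) by (auto simp: extensional_def not_less)
next
  fix k
  assume "k \<in> {..<n}"
  then show "continuous_map Y X (\<lambda>y. g y k)"
    using assms(1) by blast
qed

lemma quotient_map_james_q: "quotient_map (james_power X n) (james_filtration X e n) (james_q e n)"
  unfolding james_filtration_def by (rule quotient_map_quotient_topology)

lemma continuous_map_james_q: "continuous_map (james_power X n) (james_filtration X e n) (james_q e n)"
  using quotient_map_james_q by (rule quotient_imp_continuous_map)

lemma topspace_james_filtration:
  "topspace (james_filtration X e n) = james_q e n ` ({..<n} \<rightarrow>\<^sub>E topspace X)"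
  by (simp add: james_filtration_def topspace_quotient_topology topspace_james_power)

definition pad_word :: "'a \<Rightarrow> nat \<Rightarrow> 'a list \<Rightarrow> nat \<Rightarrow> 'a" where
  "pad_word e n w = (\<lambda>i. if i < length w then w ! i else if i < n then e else undefined)"

lemma james_q_pad_word:
  assumes "length w \<le> n" and "e \<notin> set w"
  shows "james_q e n (pad_word e n w) = w"
proof -
  have "map (pad_word e n w) [0..<n] = w @ replicate (n - length w) e"
    using assms(1) by (intro nth_equalityI) (auto simp: pad_word_def nth_append)
  then show ?thesis
    using assms(2) by (simp add: james_q_def filter_id_conv) (metis filter_True)
qed

lemma mem_topspace_james_filtration:
  assumes "e \<in> topspace X"
  shows "w \<in> topspace (james_filtration X e n) \<longleftrightarrow> set w \<subseteq> topspace X - {e} \<and> length w \<le> n"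
proof
  assume "w \<in> topspace (james_filtration X e n)"
  then obtain x where x: "x \<in> {..<n} \<rightarrow>\<^sub>E topspace X" "w = james_q e n x"
    by (auto simp: topspace_james_filtration)
  have "length w \<le> length (map x [0..<n])"
    unfolding x james_q_def by (rule length_filter_le)
  moreover have "set w \<subseteq> topspace X - {e}"
    using x by (auto simp: james_q_def PiE_iff)
  ultimately show "set w \<subseteq> topspace X - {e} \<and> length w \<le> n"
    by simp
next
  assume w: "set w \<subseteq> topspace X - {e} \<and> length w \<le> n"
  have "pad_word e n w \<in> {..<n} \<rightarrow>\<^sub>E topspace X"
  proof (rule PiE_I)
    fix i
    assume "i \<in> {..<n}"
    moreover have "w ! i \<in> topspace X" if "i < length w"
      using w nth_mem[OF that] by blast
    ultimately show "pad_word e n w i \<in> topspace X"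
      using assms by (simp add: pad_word_def)
  next
    fix i
    assume "i \<notin> {..<n}"
    then show "pad_word e n w i = undefined"
      using w by (simp add: pad_word_def)
  qed
  moreover have "w = james_q e n (pad_word e n w)"
    using w by (intro james_q_pad_word[symmetric]) auto
  ultimately show "w \<in> topspace (james_filtration X e n)"
    unfolding topspace_james_filtration using image_eqI by metis
qed

lemma james_carrier_eq:
  "e \<in> topspace X \<Longrightarrow> james_carrier X e = {w. set w \<subseteq> topspace X - {e}}"
  unfolding james_carrier_def using mem_topspace_james_filtration[of e X] by auto

lemma topspace_james_filtration_subset: "topspace (james_filtration X e n) \<subseteq> james_carrier X e"
  unfolding james_carrier_def by auto

lemma istopology_james_reduced_product:
  "istopology (\<lambda>U. U \<subseteq> james_carrier X e \<and>
     (\<forall>n. closedin (james_filtration X e n) ((james_carrier X e - U) \<inter> topspace (james_filtration X e n))))"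
  unfolding istopology_def
proof (rule conjI; intro allI impI conjI)
  fix S T n
  let ?J = "james_filtration X e n"
  assume "S \<subseteq> james_carrier X e \<and> (\<forall>n. closedin (james_filtration X e n)
            ((james_carrier X e - S) \<inter> topspace (james_filtration X e n)))"
    and "T \<subseteq> james_carrier X e \<and> (\<forall>n. closedin (james_filtration X e n)
            ((james_carrier X e - T) \<inter> topspace (james_filtration X e n)))"
  moreover have "(james_carrier X e - S \<inter> T) \<inter> topspace ?J =
     (james_carrier X e - S) \<inter> topspace ?J \<union> (james_carrier X e - T) \<inter> topspace ?J"
    by auto
  ultimately show "S \<inter> T \<subseteq> james_carrier X e"
    and "closedin ?J ((james_carrier X e - S \<inter> T) \<inter> topspace ?J)"
    by auto
next
  fix K n
  let ?J = "james_filtration X e n"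
  assume K: "\<forall>S\<in>K. S \<subseteq> james_carrier X e \<and> (\<forall>n. closedin (james_filtration X e n)
            ((james_carrier X e - S) \<inter> topspace (james_filtration X e n)))"
  then show "\<Union>K \<subseteq> james_carrier X e"
    by auto
  show "closedin ?J ((james_carrier X e - \<Union>K) \<inter> topspace ?J)"
  proof (cases "K = {}")
    case True
    then show ?thesis
      using topspace_james_filtration_subset[of X e n] by (simp add: Int_absorb1)
  next
    case False
    then have eq: "(james_carrier X e - \<Union>K) \<inter> topspace ?J = (\<Inter>S\<in>K. (james_carrier X e - S) \<inter> topspace ?J)"
      by auto
    show ?thesis
      unfolding eq by (rule closedin_INT) (use K False in auto)
  qed
qed

lemma openin_james_reduced_product:
  "openin (james_reduced_product X e) U \<longleftrightarrow> U \<subseteq> james_carrier X e \<and>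
     (\<forall>n. closedin (james_filtration X e n) ((james_carrier X e - U) \<inter> topspace (james_filtration X e n)))"
  unfolding james_reduced_product_def by (simp add: topology_inverse'[OF istopology_james_reduced_product])

lemma topspace_james_reduced_product: "topspace (james_reduced_product X e) = james_carrier X e"
proof -
  have "openin (james_reduced_product X e) (james_carrier X e)"
    unfolding openin_james_reduced_product by simp
  then show ?thesis
    by (metis openin_james_reduced_product openin_subset openin_topspace subset_antisym)
qed

lemma closedin_james_reduced_product:
  "closedin (james_reduced_product X e) C \<longleftrightarrow> C \<subseteq> james_carrier X e \<and>
     (\<forall>n. closedin (james_filtration X e n) (C \<inter> topspace (james_filtration X e n)))"
proof -
  have "C \<subseteq> james_carrier X e \<Longrightarrow> james_carrier X e - (james_carrier X e - C) = C"
    by auto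
  then show ?thesis
    unfolding closedin_def topspace_james_reduced_product openin_james_reduced_product by auto
qed

lemma james_q_cong: "(\<And>i. i < n \<Longrightarrow> x i = y i) \<Longrightarrow> james_q e n x = james_q e n y"
  unfolding james_q_def by (metis atLeastLessThan_iff map_cong set_upt)

lemma james_q_eq_map_filter: "james_q e n x = map x (filter (\<lambda>j. x j \<noteq> e) [0..<n])"
  unfolding james_q_def by (simp add: filter_map comp_def)

lemma james_q_trailing_basepoints:
  assumes "n \<le> m" and "\<And>i. n \<le> i \<Longrightarrow> i < m \<Longrightarrow> z i = e"
  shows "james_q e m z = james_q e n z"
proof -
  have "[0..<m] = [0..<n] @ [n..<m]"
    using upt_add_eq_append[of 0 n "m - n"] assms(1) by simp
  moreover have "filter (\<lambda>a. a \<noteq> e) (map z [n..<m]) = []"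
    using assms(2) by (auto simp: filter_empty_conv)
  ultimately show ?thesis
    unfolding james_q_def by simp
qed

lemma james_q_restrict_support:
  assumes "\<And>j. j < n \<Longrightarrow> j \<notin> Q \<Longrightarrow> x j = e"
  shows "james_q e n x = map x (filter (\<lambda>j. j \<in> Q \<and> x j \<noteq> e) [0..<n])"
proof -
  have "filter (\<lambda>j. x j \<noteq> e) [0..<n] = filter (\<lambda>j. j \<in> Q \<and> x j \<noteq> e) [0..<n]"
    by (rule filter_cong) (use assms in auto)
  then show ?thesis
    by (simp add: james_q_eq_map_filter)
qed

lemma james_q_strict_mono_reindex:
  assumes Q: "Q \<subseteq> {..<n}" and mono: "strict_mono_on Q \<sigma>" and \<sigma>Q: "\<sigma> ` Q \<subseteq> {..<m}"
    and x: "\<And>j. j < n \<Longrightarrow> j \<notin> Q \<Longrightarrow> x j = e"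
    and y: "\<And>i. i < m \<Longrightarrow> i \<notin> \<sigma> ` Q \<Longrightarrow> y i = e"
    and xy: "\<And>j. j \<in> Q \<Longrightarrow> x j = y (\<sigma> j)"
  shows "james_q e n x = james_q e m y"
proof -
  let ?js = "filter (\<lambda>j. j \<in> Q) [0..<n]"
  have sorted_image: "sorted_wrt (<) (map \<sigma> ?js)"
    unfolding sorted_wrt_map
    by (rule sorted_wrt_mono_rel[OF _ sorted_wrt_filter[OF sorted_wrt_upt]])
      (use mono in \<open>auto simp: strict_mono_on_def\<close>)
  have "set (map \<sigma> ?js) = set (filter (\<lambda>i. i \<in> \<sigma> ` Q) [0..<m])"
    using Q \<sigma>Q by auto
  then have image_js: "map \<sigma> ?js = filter (\<lambda>i. i \<in> \<sigma> ` Q) [0..<m]"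
    using sorted_image sorted_wrt_filter[OF sorted_wrt_upt]
    by (metis sorted_distinct_set_unique strict_sorted_iff)
  have xy_js: "map x ?js = map y (map \<sigma> ?js)"
    using xy by auto
  have "james_q e n x = filter (\<lambda>a. a \<noteq> e) (map x ?js)"
    using james_q_restrict_support[of n Q x e] x
    by (simp add: filter_map filter_filter comp_def conj_commute)
  also have "\<dots> = filter (\<lambda>a. a \<noteq> e) (map y (map \<sigma> ?js))"
    by (simp only: xy_js)
  also have "\<dots> = james_q e m y"
    using james_q_restrict_support[of m "\<sigma> ` Q" y e] y
    by (simp only: image_js) (simp add: filter_map filter_filter comp_def conj_commute)
  finally show ?thesis .
qed

lemma ex_strict_mono_on_map_eq:
  fixes qs ps :: "nat list"
  assumes "sorted_wrt (<) qs" and "sorted_wrt (<) ps" and "length ps = length qs"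
  shows "\<exists>\<sigma>. strict_mono_on (set qs) \<sigma> \<and> map \<sigma> qs = ps"
  using assms
proof (induction qs arbitrary: ps)
  case Nil
  then show ?case
    by (auto simp: strict_mono_on_def)
next
  case (Cons q qs)
  then obtain p ps' where ps: "ps = p # ps'"
    by (cases ps) auto
  obtain \<sigma> where \<sigma>: "strict_mono_on (set qs) \<sigma>" "map \<sigma> qs = ps'"
    using Cons.IH Cons.prems ps by auto
  have q_less: "q < j" if "j \<in> set qs" for j
    using Cons.prems(1) that by simp
  have p_less: "p < \<sigma> j" if "j \<in> set qs" for j
    using Cons.prems(2) ps \<sigma>(2) that by auto
  have "map (\<sigma>(q := p)) qs = ps'"
    using \<sigma>(2) q_less by (metis less_irrefl map_fun_upd)
  moreover have "strict_mono_on (set (q # qs)) (\<sigma>(q := p))"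
  proof (rule strict_mono_onI)
    fix i j
    assume "i \<in> set (q # qs)" "j \<in> set (q # qs)" "i < j"
    moreover have "j \<in> set qs"
      using calculation q_less by (metis less_asym less_irrefl set_ConsD)
    ultimately show "(\<sigma>(q := p)) i < (\<sigma>(q := p)) j"
      using p_less q_less strict_mono_onD[OF \<sigma>(1)] by (cases "i = q") auto
  qed
  ultimately show ?case
    using ps by auto
qed

text \<open>A pair \<open>(Q, \<sigma>)\<close> encodes the order-preserving partial map \<open>\<sigma>|Q\<close> on \<open>{..<n}\<close>;
  extensionality of \<open>\<sigma>\<close> only serves to make the family finite.\<close>
definition strict_mono_partial_maps :: "nat \<Rightarrow> (nat set \<times> (nat \<Rightarrow> nat)) set" where
  "strict_mono_partial_maps n =
     {(Q, \<sigma>). Q \<subseteq> {..<n} \<and> \<sigma> \<in> {..<n} \<rightarrow>\<^sub>E {..<n} \<and> strict_mono_on Q \<sigma>}"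

lemma finite_strict_mono_partial_maps: "finite (strict_mono_partial_maps n)"
  by (rule finite_subset[of _ "Pow {..<n} \<times> ({..<n} \<rightarrow>\<^sub>E {..<n})"])
    (auto simp: strict_mono_partial_maps_def finite_PiE)

definition james_reindex :: "'a \<Rightarrow> nat \<Rightarrow> nat set \<Rightarrow> (nat \<Rightarrow> nat) \<Rightarrow> (nat \<Rightarrow> 'a) \<Rightarrow> nat \<Rightarrow> 'a" where
  "james_reindex e n Q \<sigma> z = (\<lambda>j. if j < n then if j \<in> Q then z (\<sigma> j) else e else undefined)"

lemma continuous_map_james_reindex:
  assumes "\<sigma> ` Q \<subseteq> {..<n}" and "e \<in> topspace X"
  shows "continuous_map (james_power X n) (james_power X n) (james_reindex e n Q \<sigma>)"
proof (rule continuous_map_into_james_power)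
  fix k
  assume "k < n"
  then show "continuous_map (james_power X n) X (\<lambda>z. james_reindex e n Q \<sigma> z k)"
    using assms by (cases "k \<in> Q") (auto simp: james_reindex_def continuous_map_james_power_component)
qed (simp add: james_reindex_def)

lemma james_q_james_reindex:
  assumes "(Q, \<sigma>) \<in> strict_mono_partial_maps n" and "\<forall>i \<in> {..<n} - \<sigma> ` Q. x i = e"
  shows "james_q e n (james_reindex e n Q \<sigma> x) = james_q e n x"
proof -
  have "Q \<subseteq> {..<n}" "strict_mono_on Q \<sigma>" "\<sigma> ` Q \<subseteq> {..<n}"
    using assms(1) by (auto simp: strict_mono_partial_maps_def)
  then show ?thesis
    by (rule james_q_strict_mono_reindex) (use assms(2) \<open>Q \<subseteq> {..<n}\<close> in \<open>auto simp: james_reindex_def\<close>)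
qed

lemma ex_james_reindex_if_james_q_eq:
  assumes "a \<in> topspace (james_power X n)" and q_eq: "james_q e n x = james_q e n a"
  shows "\<exists>(Q, \<sigma>) \<in> strict_mono_partial_maps n.
    (\<forall>i \<in> {..<n} - \<sigma> ` Q. x i = e) \<and> james_reindex e n Q \<sigma> x = a"
proof -
  define qs where "qs = filter (\<lambda>j. a j \<noteq> e) [0..<n]"
  define ps where "ps = filter (\<lambda>j. x j \<noteq> e) [0..<n]"
  have map_eq: "map a qs = map x ps"
    using q_eq unfolding james_q_eq_map_filter qs_def ps_def by simp
  \<comment> \<open>\<open>\<sigma>0\<close> sends the \<open>k\<close>-th letter position of \<open>a\<close> to the \<open>k\<close>-th letter position of \<open>x\<close>\<close>
  then obtain \<sigma>0 where \<sigma>0: "strict_mono_on (set qs) \<sigma>0" "map \<sigma>0 qs = ps"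
    using ex_strict_mono_on_map_eq[of qs ps] unfolding qs_def ps_def
    by (metis length_map sorted_wrt_filter sorted_wrt_upt)
  define Q where "Q = set qs"
  define \<sigma> where "\<sigma> = (\<lambda>j. if j \<in> Q then \<sigma>0 j else if j < n then 0 else undefined)"
  have Q_eq: "Q = {j. j < n \<and> a j \<noteq> e}"
    by (auto simp: Q_def qs_def)
  have "\<sigma> ` Q = set ps"
    using \<sigma>0(2) by (auto simp: \<sigma>_def Q_def simp flip: set_map)
  then have \<sigma>Q: "\<sigma> ` Q = {j. j < n \<and> x j \<noteq> e}"
    by (auto simp: ps_def)
  have "map a qs = map (x \<circ> \<sigma>0) qs"
    using map_eq by (simp flip: \<sigma>0(2))
  then have a_eq: "a j = x (\<sigma> j)" if "j \<in> Q" for j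
    using that unfolding map_eq_conv by (simp add: Q_def \<sigma>_def)
  have "\<sigma> \<in> {..<n} \<rightarrow>\<^sub>E {..<n}"
  proof (rule PiE_I)
    fix j
    assume "j \<in> {..<n}"
    then show "\<sigma> j \<in> {..<n}"
      using \<sigma>Q by (cases "j \<in> Q") (auto simp: \<sigma>_def)
  next
    fix j
    assume "j \<notin> {..<n}"
    then show "\<sigma> j = undefined"
      using Q_eq by (simp add: \<sigma>_def)
  qed
  moreover have "strict_mono_on Q \<sigma>"
    using \<sigma>0(1) by (simp add: strict_mono_on_def \<sigma>_def Q_def)
  ultimately have "(Q, \<sigma>) \<in> strict_mono_partial_maps n"
    using Q_eq by (auto simp: strict_mono_partial_maps_def)
  moreover have "james_reindex e n Q \<sigma> x j = a j" for j
  proof (cases "j \<in> Q")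
    case True
    moreover have "j < n"
      using True Q_eq by blast
    ultimately show ?thesis
      using a_eq[OF True] by (simp add: james_reindex_def)
  next
    case False
    then show ?thesis
      using assms(1) Q_eq by (auto simp: james_reindex_def topspace_james_power PiE_iff extensional_def)
  qed
  then have "james_reindex e n Q \<sigma> x = a" ..
  ultimately show ?thesis
    using \<sigma>Q by auto
qed

lemma james_q_eq_iff_reindex:
  assumes "a \<in> topspace (james_power X n)"
  shows "james_q e n x = james_q e n a \<longleftrightarrow>
    (\<exists>(Q, \<sigma>) \<in> strict_mono_partial_maps n.
       (\<forall>i \<in> {..<n} - \<sigma> ` Q. x i = e) \<and> james_reindex e n Q \<sigma> x = a)"
  using ex_james_reindex_if_james_q_eq[OF assms, of e x] james_q_james_reindex[of _ _ n x e] by auto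

lemma closedin_james_power_basepoint_coordinates:
  assumes "t1_space X" and "e \<in> topspace X" and "F \<subseteq> {..<n}"
  shows "closedin (james_power X n) {z \<in> topspace (james_power X n). \<forall>i\<in>F. z i = e}"
proof (cases "F = {}")
  case True
  then show ?thesis
    by simp
next
  case False
  have "{z \<in> topspace (james_power X n). \<forall>i\<in>F. z i = e} =
     (\<Inter>i\<in>F. {z \<in> topspace (james_power X n). z i \<in> {e}})"
    using False by auto
  also have "closedin (james_power X n) \<dots>"
  proof (rule closedin_INT[OF False], rule closedin_continuous_map_preimage)
    fix i
    assume "i \<in> F"
    then show "continuous_map (james_power X n) X (\<lambda>z. z i)"
      using assms(3) by (auto intro: continuous_map_james_power_component)
    show "closedin X {e}"
      using assms(1,2) by (rule closedin_t1_singleton)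
  qed
  finally show ?thesis .
qed

lemma james_q_saturation_eq:
  assumes "A \<subseteq> topspace (james_power X n)"
  shows "{x \<in> topspace (james_power X n). james_q e n x \<in> james_q e n ` A} =
    (\<Union>(Q, \<sigma>) \<in> strict_mono_partial_maps n.
       {z \<in> topspace (james_power X n). \<forall>i\<in>{..<n} - \<sigma> ` Q. z i = e} \<inter>
       {z \<in> topspace (james_power X n). james_reindex e n Q \<sigma> z \<in> A})"
    (is "?S = ?U")
proof (rule set_eqI)
  fix x
  show "x \<in> ?S \<longleftrightarrow> x \<in> ?U"
  proof (cases "x \<in> topspace (james_power X n)")
    case x: True
    have "x \<in> ?S \<longleftrightarrow> (\<exists>a\<in>A. james_q e n x = james_q e n a)"
      using x by auto
    also have "\<dots> \<longleftrightarrow> (\<exists>a\<in>A. \<exists>(Q, \<sigma>) \<in> strict_mono_partial_maps n.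
        (\<forall>i \<in> {..<n} - \<sigma> ` Q. x i = e) \<and> james_reindex e n Q \<sigma> x = a)"
    proof (rule bex_cong[OF refl])
      fix a
      assume "a \<in> A"
      then have "a \<in> topspace (james_power X n)"
        using assms by blast
      then show "james_q e n x = james_q e n a \<longleftrightarrow> (\<exists>(Q, \<sigma>) \<in> strict_mono_partial_maps n.
          (\<forall>i \<in> {..<n} - \<sigma> ` Q. x i = e) \<and> james_reindex e n Q \<sigma> x = a)"
        by (rule james_q_eq_iff_reindex)
    qed
    also have "\<dots> \<longleftrightarrow> x \<in> ?U"
      using x by auto
    finally show ?thesis .
  next
    case False
    then show ?thesis
      by (auto split: prod.splits)
  qed
qed

lemma closed_map_james_q:
  assumes t1: "t1_space X" and e: "e \<in> topspace X"
  shows "closed_map (james_power X n) (james_filtration X e n) (james_q e n)"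
  unfolding closed_map_def
proof (intro allI impI)
  fix A
  assume A: "closedin (james_power X n) A"
  let ?T = "topspace (james_power X n)"
  have "closedin (james_power X n)
      ({z \<in> ?T. \<forall>i\<in>{..<n} - \<sigma> ` Q. z i = e} \<inter> {z \<in> ?T. james_reindex e n Q \<sigma> z \<in> A})"
    if "(Q, \<sigma>) \<in> strict_mono_partial_maps n" for Q \<sigma>
  proof (rule closedin_Int)
    show "closedin (james_power X n) {z \<in> ?T. \<forall>i\<in>{..<n} - \<sigma> ` Q. z i = e}"
      by (rule closedin_james_power_basepoint_coordinates[OF t1 e]) auto
    have "\<sigma> ` Q \<subseteq> {..<n}"
      using that by (auto simp: strict_mono_partial_maps_def)
    then show "closedin (james_power X n) {z \<in> ?T. james_reindex e n Q \<sigma> z \<in> A}"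
      by (rule closedin_continuous_map_preimage[OF continuous_map_james_reindex[OF _ e] A])
  qed
  then have "closedin (james_power X n) {x \<in> ?T. james_q e n x \<in> james_q e n ` A}"
    unfolding james_q_saturation_eq[OF closedin_subset[OF A]]
    by (intro closedin_Union finite_imageI finite_strict_mono_partial_maps) auto
  moreover have "james_q e n ` A \<subseteq> topspace (james_filtration X e n)"
    using closedin_subset[OF A] quotient_imp_surjective_map[OF quotient_map_james_q[of X n e]] by blast
  ultimately show "closedin (james_filtration X e n) (james_q e n ` A)"
    using quotient_map_james_q[of X n e] unfolding quotient_map_closedin by blast
qed

lemma proper_map_james_q:
  assumes "t1_space X" and "e \<in> topspace X"
  shows "proper_map (james_power X n) (james_filtration X e n) (james_q e n)"
  unfolding proper_map_def
proof (intro conjI ballI closed_map_james_q[OF assms])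
  fix w
  have "{x \<in> topspace (james_power X n). james_q e n x = w} \<subseteq> {..<n} \<rightarrow>\<^sub>E insert e (set w)"
    by (auto simp: topspace_james_power james_q_def PiE_iff extensional_def)
  then have "finite {x \<in> topspace (james_power X n). james_q e n x = w}"
    by (rule finite_subset) (simp add: finite_PiE)
  then show "compactin (james_power X n) {x \<in> topspace (james_power X n). james_q e n x = w}"
    by (simp add: finite_imp_compactin)
qed

lemma t1_space_james_filtration:
  assumes "t1_space X" and "e \<in> topspace X"
  shows "t1_space (james_filtration X e n)"
proof (rule t1_space_closed_map_image)
  show "closed_map (james_power X n) (james_filtration X e n) (james_q e n)"
    using assms by (rule closed_map_james_q)
  show "james_q e n ` topspace (james_power X n) = topspace (james_filtration X e n)"
    using quotient_map_james_q by (rule quotient_imp_surjective_map)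
  show "t1_space (james_power X n)"
    unfolding james_power_def t1_space_product_topology using assms(1) by simp
qed

definition pad_tuple :: "'a \<Rightarrow> nat \<Rightarrow> nat \<Rightarrow> (nat \<Rightarrow> 'a) \<Rightarrow> nat \<Rightarrow> 'a" where
  "pad_tuple e n m y = (\<lambda>i. if i < n then y i else if i < m then e else undefined)"

lemma continuous_map_pad_tuple:
  assumes "e \<in> topspace X" and "n \<le> m"
  shows "continuous_map (james_power X n) (james_power X m) (pad_tuple e n m)"
proof (rule continuous_map_into_james_power)
  fix k
  assume "k < m"
  then show "continuous_map (james_power X n) X (\<lambda>y. pad_tuple e n m y k)"
    using assms(1) by (cases "k < n") (simp_all add: pad_tuple_def continuous_map_james_power_component)
qed (use assms(2) in \<open>simp add: pad_tuple_def\<close>)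

lemma james_q_pad_tuple: "n \<le> m \<Longrightarrow> james_q e m (pad_tuple e n m y) = james_q e n y"
  by (subst james_q_trailing_basepoints[of n m]) (auto simp: pad_tuple_def intro: james_q_cong)

lemma continuous_map_james_filtration_inclusion:
  assumes "e \<in> topspace X" and "n \<le> m"
  shows "continuous_map (james_filtration X e n) (james_filtration X e m) id"
proof (rule continuous_compose_quotient_map[OF quotient_map_james_q])
  have "continuous_map (james_power X n) (james_filtration X e m) (james_q e m \<circ> pad_tuple e n m)"
    using continuous_map_pad_tuple[OF assms] continuous_map_james_q by (rule continuous_map_compose)
  moreover have "james_q e m \<circ> pad_tuple e n m = id \<circ> james_q e n"
    using assms(2) by (simp add: fun_eq_iff james_q_pad_tuple)
  ultimately show "continuous_map (james_power X n) (james_filtration X e m) (id \<circ> james_q e n)"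
    by simp
qed

lemma closedin_james_filtration_mono:
  assumes t1: "t1_space X" and e: "e \<in> topspace X" and "n \<le> m"
    and C: "closedin (james_filtration X e n) C"
  shows "closedin (james_filtration X e m) C"
proof -
  let ?Cn = "{y \<in> topspace (james_power X n). james_q e n y \<in> C}"
  define B where "B = {z \<in> topspace (james_power X m). \<forall>i\<in>{..<m} - {..<n}. z i = e} \<inter>
      {z \<in> topspace (james_power X m). restrict z {..<n} \<in> ?Cn}"
  have restrict_continuous: "continuous_map (james_power X m) (james_power X n) (\<lambda>z. restrict z {..<n})"
    using \<open>n \<le> m\<close> by (intro continuous_map_into_james_power) (auto intro: continuous_map_james_power_component)
  have "closedin (james_power X n) ?Cn"
    using C quotient_map_james_q[of X n e] closedin_subset[OF C]
    unfolding quotient_map_closedin by blast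
  then have "closedin (james_power X m) B"
    unfolding B_def
    by (intro closedin_Int closedin_james_power_basepoint_coordinates[OF t1 e]
        closedin_continuous_map_preimage[OF restrict_continuous]) auto
  moreover have "james_q e m ` B = C"
  proof (intro equalityI subsetI)
    fix w
    assume "w \<in> james_q e m ` B"
    then obtain z where z: "z \<in> B" "w = james_q e m z"
      by auto
    have "james_q e m z = james_q e n z"
      using z(1) \<open>n \<le> m\<close> by (intro james_q_trailing_basepoints) (auto simp: B_def)
    also have "\<dots> = james_q e n (restrict z {..<n})"
      by (rule james_q_cong) simp
    finally show "w \<in> C"
      using z by (auto simp: B_def)
  next
    fix w
    assume w: "w \<in> C"
    then obtain y where y: "y \<in> topspace (james_power X n)" "w = james_q e n y"
      using closedin_subset[OF C] by (auto simp: topspace_james_filtration topspace_james_power)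
    have "pad_tuple e n m y \<in> topspace (james_power X m)"
      using continuous_map_image_subset_topspace[OF continuous_map_pad_tuple[OF e \<open>n \<le> m\<close>]] y(1)
      by auto
    moreover have "restrict (pad_tuple e n m y) {..<n} = y"
      using y(1) by (auto simp: pad_tuple_def topspace_james_power PiE_iff extensional_def fun_eq_iff)
    ultimately have "pad_tuple e n m y \<in> B"
      using y w \<open>n \<le> m\<close> by (auto simp: B_def pad_tuple_def)
    then show "w \<in> james_q e m ` B"
      using james_q_pad_tuple[OF \<open>n \<le> m\<close>, of e y] y(2) by (metis image_eqI)
  qed
  ultimately show ?thesis
    using closed_map_james_q[OF t1 e, of m] unfolding closed_map_def by auto
qed

lemma continuous_map_james_filtration_inclusion_james:
  "continuous_map (james_filtration X e n) (james_reduced_product X e) id"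
  unfolding continuous_map_closedin
proof (intro conjI allI impI)
  show "id \<in> topspace (james_filtration X e n) \<rightarrow> topspace (james_reduced_product X e)"
    using topspace_james_filtration_subset[of X e n] by (auto simp: topspace_james_reduced_product)
  fix C
  assume "closedin (james_reduced_product X e) C"
  then show "closedin (james_filtration X e n) {x \<in> topspace (james_filtration X e n). id x \<in> C}"
  proof -
    have "{x \<in> topspace (james_filtration X e n). id x \<in> C} = C \<inter> topspace (james_filtration X e n)"
      by auto
    then show ?thesis
      using \<open>closedin (james_reduced_product X e) C\<close> unfolding closedin_james_reduced_product by simp
  qed
qed

lemma closedin_james_reduced_product_if_filtration:
  assumes t1: "t1_space X" and e: "e \<in> topspace X" and C: "closedin (james_filtration X e n) C"
  shows "closedin (james_reduced_product X e) C"
  unfolding closedin_james_reduced_product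
proof (intro conjI allI)
  show "C \<subseteq> james_carrier X e"
    using closedin_subset[OF C] topspace_james_filtration_subset[of X e n] by (rule order_trans)
  fix m
  show "closedin (james_filtration X e m) (C \<inter> topspace (james_filtration X e m))"
  proof (cases "m \<le> n")
    case True
    have "closedin (james_filtration X e m) {x \<in> topspace (james_filtration X e m). id x \<in> C}"
      by (rule closedin_continuous_map_preimage[OF continuous_map_james_filtration_inclusion[OF e True] C])
    moreover have "{x \<in> topspace (james_filtration X e m). id x \<in> C} = C \<inter> topspace (james_filtration X e m)"
      by auto
    ultimately show ?thesis
      by simp
  next
    case False
    then have "closedin (james_filtration X e m) C"
      by (intro closedin_james_filtration_mono[OF t1 e _ C]) simp
    then show ?thesis
      using closedin_subset[of "james_filtration X e m" C] by (simp add: Int_absorb2)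
  qed
qed

lemma continuous_map_into_james_filtration:
  assumes t1: "t1_space X" and e: "e \<in> topspace X"
    and g: "continuous_map Y (james_reduced_product X e) g"
    and g_sub: "g ` topspace Y \<subseteq> topspace (james_filtration X e n)"
  shows "continuous_map Y (james_filtration X e n) g"
  unfolding continuous_map_closedin
proof (intro conjI allI impI)
  show "g \<in> topspace Y \<rightarrow> topspace (james_filtration X e n)"
    using g_sub by auto
  fix C
  assume "closedin (james_filtration X e n) C"
  then have "closedin (james_reduced_product X e) C"
    by (rule closedin_james_reduced_product_if_filtration[OF t1 e])
  then show "closedin Y {x \<in> topspace Y. g x \<in> C}"
    by (rule closedin_continuous_map_preimage[OF g])
qed

lemma closedin_james_reduced_product_if_finite_inter:
  assumes t1: "t1_space X" and e: "e \<in> topspace X" and "C \<subseteq> james_carrier X e"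
    and fin: "\<And>n. finite (C \<inter> topspace (james_filtration X e n))"
  shows "closedin (james_reduced_product X e) C"
  unfolding closedin_james_reduced_product
proof (intro conjI allI)
  fix n
  show "closedin (james_filtration X e n) (C \<inter> topspace (james_filtration X e n))"
    using t1_space_james_filtration[OF t1 e, of n] fin[of n]
    unfolding t1_space_closedin_finite by blast
qed (fact assms(3))

lemma closedin_james_reduced_product_if_long_words:
  assumes t1: "t1_space X" and e: "e \<in> topspace X" and "range f \<subseteq> james_carrier X e"
    and long: "\<And>n. n < length (f n)" and C: "C \<subseteq> range f"
  shows "closedin (james_reduced_product X e) C"
proof (rule closedin_james_reduced_product_if_finite_inter[OF t1 e])
  show "C \<subseteq> james_carrier X e"
    using C assms(3) by blast
  fix n
  have "C \<inter> topspace (james_filtration X e n) \<subseteq> f ` {..<n}"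
  proof
    fix w
    assume "w \<in> C \<inter> topspace (james_filtration X e n)"
    then obtain j where j: "w = f j" and "length w \<le> n"
      using C by (auto simp: mem_topspace_james_filtration[OF e])
    then have "j < n"
      using long[of j] by simp
    then show "w \<in> f ` {..<n}"
      using j by blast
  qed
  then show "finite (C \<inter> topspace (james_filtration X e n))"
    by (rule finite_subset) simp
qed

lemma derived_set_of_eq_empty_if_subsets_closedin:
  assumes "\<And>C. C \<subseteq> S \<Longrightarrow> closedin X C"
  shows "X derived_set_of S = {}"
proof -
  have "x \<notin> X derived_set_of S" for x
  proof
    let ?U = "topspace X - (S - {x})"
    assume "x \<in> X derived_set_of S"
    then have "x \<in> ?U" and limit: "\<And>U. x \<in> U \<Longrightarrow> openin X U \<Longrightarrow> \<exists>y. y \<noteq> x \<and> y \<in> S \<and> y \<in> U"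
      by (auto simp: derived_set_of_def)
    moreover have "openin X ?U"
      by (rule openin_diff[OF openin_topspace assms]) auto
    ultimately obtain y where "y \<noteq> x" "y \<in> S" "y \<in> ?U"
      using limit by metis
    then show False
      by simp
  qed
  then show ?thesis
    by blast
qed

lemma compactin_james_reduced_product_imp_subset_filtration:
  assumes t1: "t1_space X" and e: "e \<in> topspace X"
    and K: "compactin (james_reduced_product X e) K"
  shows "\<exists>n. K \<subseteq> topspace (james_filtration X e n)"
proof (rule ccontr)
  let ?J = "james_reduced_product X e"
  assume "\<nexists>n. K \<subseteq> topspace (james_filtration X e n)"
  have K_sub: "K \<subseteq> james_carrier X e"
    using compactin_subset_topspace[OF K] by (simp add: topspace_james_reduced_product)
  have "\<exists>w\<in>K. n < length w" for n
  proof -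
    obtain w where w: "w \<in> K" "w \<notin> topspace (james_filtration X e n)"
      using \<open>\<nexists>n. K \<subseteq> topspace (james_filtration X e n)\<close> by blast
    then have "n < length w"
      using K_sub by (auto simp: james_carrier_eq[OF e] mem_topspace_james_filtration[OF e])
    then show ?thesis
      using w(1) by blast
  qed
  then obtain f where f: "\<And>n. f n \<in> K" "\<And>n. n < length (f n)"
    by metis
  have infinite: "infinite (range f)"
  proof
    assume "finite (range f)"
    then obtain b where "\<forall>w\<in>range f. length w \<le> b"
      using finite_nat_set_iff_bounded_le[of "length ` range f"] by auto
    then have "length (f b) \<le> b"
      by simp
    then show False
      using f(2)[of b] by simp
  qed
  have closed: "closedin ?J C" if "C \<subseteq> range f" for C
    using f K_sub that by (intro closedin_james_reduced_product_if_long_words[OF t1 e]) blast+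
  have "?J derived_set_of range f = {}"
    using closed by (rule derived_set_of_eq_empty_if_subsets_closedin)
  have "infinite (range f) \<and> range f \<subseteq> K"
    using infinite f(1) by auto
  then have "K \<inter> ?J derived_set_of range f \<noteq> {}"
    by (rule compactin_imp_Bolzano_Weierstrass[OF K])
  with \<open>?J derived_set_of range f = {}\<close> show False
    by simp
qed

lemma pathin_james_reduced_product_imp_filtration:
  assumes t1: "t1_space X" and e: "e \<in> topspace X" and \<alpha>: "pathin (james_reduced_product X e) \<alpha>"
  shows "\<exists>n. pathin (james_filtration X e n) \<alpha>"
proof -
  have "compactin (james_reduced_product X e) (\<alpha> ` {0..1})"
    using \<alpha> unfolding pathin_def
    by (intro image_compactin[of _ "{0..1}"]) (simp_all add: compactin_subtopology)
  then obtain n where "\<alpha> ` {0..1} \<subseteq> topspace (james_filtration X e n)"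
    using compactin_james_reduced_product_imp_subset_filtration[OF t1 e] by blast
  then have "pathin (james_filtration X e n) \<alpha>"
    using \<alpha> unfolding pathin_def by (intro continuous_map_into_james_filtration[OF t1 e]) auto
  then show ?thesis ..
qed

definition juxtapose :: "nat \<Rightarrow> nat \<Rightarrow> (nat \<Rightarrow> 'a) \<times> (nat \<Rightarrow> 'a) \<Rightarrow> nat \<Rightarrow> 'a" where
  "juxtapose n m z = (\<lambda>i. if i < n then fst z i else if i < n + m then snd z (i - n) else undefined)"

lemma continuous_map_juxtapose:
  "continuous_map (prod_topology (james_power X n) (james_power X m)) (james_power X (n + m)) (juxtapose n m)"
proof (rule continuous_map_into_james_power)
  fix k
  assume k: "k < n + m"
  show "continuous_map (prod_topology (james_power X n) (james_power X m)) X (\<lambda>z. juxtapose n m z k)"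
  proof (cases "k < n")
    case True
    then have "continuous_map (prod_topology (james_power X n) (james_power X m)) X ((\<lambda>x. x k) \<circ> fst)"
      by (intro continuous_map_compose[OF continuous_map_fst] continuous_map_james_power_component)
    then show ?thesis
      using True by (simp add: juxtapose_def comp_def)
  next
    case False
    then have "continuous_map (prod_topology (james_power X n) (james_power X m)) X ((\<lambda>y. y (k - n)) \<circ> snd)"
      using k by (intro continuous_map_compose[OF continuous_map_snd] continuous_map_james_power_component) simp
    then show ?thesis
      using False k by (simp add: juxtapose_def comp_def)
  qed
qed (simp add: juxtapose_def)

lemma james_q_juxtapose: "james_q e (n + m) (juxtapose n m z) = james_q e n (fst z) @ james_q e m (snd z)"
proof -
  have "map (juxtapose n m z) [0..<n + m] = map (fst z) [0..<n] @ map (snd z) [0..<m]"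
    by (rule nth_equalityI) (auto simp: juxtapose_def nth_append)
  then show ?thesis
    by (simp add: james_q_def)
qed

lemma continuous_map_james_filtration_append:
  assumes t1: "t1_space X" and e: "e \<in> topspace X"
  shows "continuous_map (prod_topology (james_filtration X e n) (james_filtration X e m))
    (james_filtration X e (n + m)) (\<lambda>(u, v). u @ v)"
proof (rule continuous_compose_quotient_map)
  let ?q = "\<lambda>(x, y). (james_q e n x, james_q e m y)"
  show "quotient_map (prod_topology (james_power X n) (james_power X m))
      (prod_topology (james_filtration X e n) (james_filtration X e m)) ?q"
  proof (rule continuous_closed_imp_quotient_map)
    show "continuous_map (prod_topology (james_power X n) (james_power X m))
        (prod_topology (james_filtration X e n) (james_filtration X e m)) ?q"
      unfolding continuous_map_prod_top by (simp add: continuous_map_james_q)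
    show "closed_map (prod_topology (james_power X n) (james_power X m))
        (prod_topology (james_filtration X e n) (james_filtration X e m)) ?q"
      by (rule proper_imp_closed_map) (simp add: proper_map_prod proper_map_james_q[OF t1 e])
    show "?q ` topspace (prod_topology (james_power X n) (james_power X m)) =
        topspace (prod_topology (james_filtration X e n) (james_filtration X e m))"
      using quotient_imp_surjective_map[OF quotient_map_james_q[of X n e]]
        quotient_imp_surjective_map[OF quotient_map_james_q[of X m e]]
      by (simp add: image_paired_Times)
  qed
  have "(\<lambda>(u, v). u @ v) \<circ> ?q = james_q e (n + m) \<circ> juxtapose n m"
    by (simp add: fun_eq_iff james_q_juxtapose)
  then show "continuous_map (prod_topology (james_power X n) (james_power X m))
      (james_filtration X e (n + m)) ((\<lambda>(u, v). u @ v) \<circ> ?q)"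
    using continuous_map_compose[OF continuous_map_juxtapose continuous_map_james_q] by simp
qed

lemma pathin_james_reduced_product_append:
  assumes t1: "t1_space X" and e: "e \<in> topspace X"
    and "pathin (james_reduced_product X e) \<alpha>" and "pathin (james_reduced_product X e) \<beta>"
  shows "pathin (james_reduced_product X e) (\<lambda>t. \<alpha> t @ \<beta> t)"
proof -
  obtain n m where "pathin (james_filtration X e n) \<alpha>" and "pathin (james_filtration X e m) \<beta>"
    using pathin_james_reduced_product_imp_filtration[OF t1 e] assms(3,4) by metis
  then have "pathin (prod_topology (james_filtration X e n) (james_filtration X e m)) (\<lambda>t. (\<alpha> t, \<beta> t))"
    unfolding pathin_def by (rule continuous_map_pairedI)
  then have "pathin (james_filtration X e (n + m)) ((\<lambda>(u, v). u @ v) \<circ> (\<lambda>t. (\<alpha> t, \<beta> t)))"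
    using continuous_map_james_filtration_append[OF t1 e] by (rule pathin_compose)
  then have "pathin (james_filtration X e (n + m)) (\<lambda>t. \<alpha> t @ \<beta> t)"
    by (simp add: comp_def)
  then have "pathin (james_reduced_product X e) (id \<circ> (\<lambda>t. \<alpha> t @ \<beta> t))"
    by (rule pathin_compose[OF _ continuous_map_james_filtration_inclusion_james])
  then show ?thesis
    by simp
qed

theorem mainTheorem15:
  fixes X :: "'a topology" and e :: 'a
  assumes "Hausdorff_space X" and "e \<in> topspace X"
  shows "pre_delta_monoid (james_reduced_product X e) (@) []"
proof -
  have "t1_space X"
    using assms(1) by (rule Hausdorff_imp_t1_space)
  then show ?thesis
    unfolding pre_delta_monoid_def topspace_james_reduced_product james_carrier_eq[OF assms(2)]
    using pathin_james_reduced_product_append[OF _ assms(2)] by auto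
qed

end
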